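(* Let $f$ be a complex polynomial of degree $d$ with $f(0)\ne0$, with roots $\zeta_1,\dots,\zeta_d$ (counted with multiplicity) ordered so that $|\zeta_1|\le\cdots\le|\zeta_d|$. For $N\ge0$ let $g=G^Nf=\sum_i g_ix^i$, let $r^{(N)}:[0,d]\to\mathbb{R}\cup\{+\infty\}$ be the piecewise linear function with $r^{(N)}(i)=-2^{-N}\log|g_i|$ for $i=0,\dots,d$, and let $\varphi^{(N)}$ be its convex hull (the greatest convex function on $[0,d]$ bounded above by $r^{(N)}$). Then for every $i=1,\dots,d$, \[ \lim_{N\to\infty}\big(\varphi^{(N)}(i)-\varphi^{(N)}(i-1)\big)=\log|\zeta_i|, \] and moreover $\big|\varphi^{(N)}(i)-\varphi^{(N)}(i-1)-\log|\zeta_i|\big|\le 2^{-N}\log(2d)$ for every $N$.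
   Context: $\log$ is the natural logarithm. The Graeffe operator maps a degree $d$ polynomial $f$ to $Gf(x)=(-1)^d f(\sqrt{x})f(-\sqrt{x})$, again of degree $d$; $G^N$ is its $N$-th iterate. The function $\varphi^{(N)}$ is called the $N$-th Renormalized Newton Diagram of $f$. *)

theory Defs
  imports "HOL-Analysis.Analysis" "HOL-Computational_Algebra.Polynomial"
begin

text \<open>Graeffe operator: (G f)(x^2) = (-1)^d f(x) f(-x), i.e. the coefficient of x^i in G f
  is (-1)^d times the coefficient of x^(2i) in f(x) f(-x).\<close>
definition graeffe :: "complex poly \<Rightarrow> complex poly" where
  "graeffe f = smult ((-1) ^ degree f)
     (Poly (map (\<lambda>i. coeff (f * pcompose f [:0, -1:]) (2 * i)) [0..<Suc (degree f)]))"

definition newton_pt :: "complex poly \<Rightarrow> nat \<Rightarrow> nat \<Rightarrow> ereal" where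
  "newton_pt f N i = (let c = coeff ((graeffe ^^ N) f) i in
      if c = 0 then \<infinity> else ereal (- ln (norm c) / 2 ^ N))"

definition newton_r :: "complex poly \<Rightarrow> nat \<Rightarrow> real \<Rightarrow> ereal" where
  "newton_r f N t = (let k = nat \<lfloor>t\<rfloor>; s = t - real k in
      ereal (1 - s) * newton_pt f N k + ereal s * newton_pt f N (Suc k))"

definition rnd :: "complex poly \<Rightarrow> nat \<Rightarrow> real \<Rightarrow> real" where
  "rnd f N t = Sup {h t | h. convex_on {0..real (degree f)} h \<and>
      (\<forall>s\<in>{0..real (degree f)}. ereal (h s) \<le> newton_r f N s)}"

end

theory Submission
  imports Defs "HOL-Computational_Algebra.Polynomial_FPS"
begin

text \<open>
  After N Graeffe steps f becomes c^(2^N) times the product of the factors x - w_k with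
  w_k = zeta_k^(2^N). Write g = G^N f. If a polynomial factors as h = p * prod_k (1 - z_k x)
  with deg p <= a and card K * max |z_k| * rho <= 1/2, then dividing by the product (a product of
  geometric series whose coefficients decay like 2^-l on |x| = rho) shows that the maximal term
  of h on the circle |x| = rho, i.e. the index maximising |h_m| rho^m, has index m <= a.
  For rho = |w_i| / (2d) this applies to g with the factors k >= i written as -w_k (1 - x/w_k),
  giving a maximal term of index m < i; applied to the reversed polynomial it gives, for
  rho = 2d |w_i|, a maximal term of index j >= i.

  A maximal term at index m for the radius rho says exactly that the line of slope
  ln rho / 2^N through (m, -ln |g_m| / 2^N) lies below all points (k, -ln |g_k| / 2^N), so it
  is a convex minorant of r^(N) touching the renormalized Newton diagram at m. By convexity the
  slope of the diagram on [i - 1, i] is at least ln rho / 2^N when m < i and at most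
  ln rho / 2^N when m >= i. The two radii give the bounds ln |zeta_i| -/+ ln (2d) / 2^N.
\<close>

section \<open>Graeffe iterates of a product of linear factors\<close>

lemma coeff_pcompose_square_var:
  fixes q :: "'a::comm_semiring_1 poly"
  shows "coeff (pcompose q [:0, 0, 1:]) (2 * i) = coeff q i"
proof (induction q arbitrary: i)
  case (pCons a q)
  then show ?case
    by (cases i) (simp_all add: pcompose_pCons)
qed simp

lemma Poly_map_coeff_upt: "degree q \<le> d \<Longrightarrow> Poly (map (coeff q) [0..<Suc d]) = q"
  by (rule poly_eqI) (auto simp: nth_default_def coeff_eq_0 simp del: upt_Suc)

lemma degree_prod_linear:
  fixes w :: "'b \<Rightarrow> 'a::idom"
  shows "degree (\<Prod>k\<in>A. [:- w k, 1:]) = card A"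
  by (simp add: degree_prod_eq_sum_degree)

lemma coeff_smult_prod_linear_nonzero:
  fixes w :: "nat \<Rightarrow> 'a::idom"
  assumes C: "C \<noteq> 0" and w0: "\<And>k. k \<in> {1..d} \<Longrightarrow> w k \<noteq> 0"
  shows "coeff (smult C (\<Prod>k=1..d. [:- w k, 1:])) 0 \<noteq> 0"
    and "coeff (smult C (\<Prod>k=1..d. [:- w k, 1:])) d \<noteq> 0"
proof -
  show "coeff (smult C (\<Prod>k=1..d. [:- w k, 1:])) 0 \<noteq> 0"
    using C w0 by (simp add: poly_prod flip: poly_0_coeff_0)
  have "lead_coeff (smult C (\<Prod>k=1..d. [:- w k, 1:])) = C"
    by (simp add: lead_coeff_prod)
  then show "coeff (smult C (\<Prod>k=1..d. [:- w k, 1:])) d \<noteq> 0"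
    using C by (simp add: degree_prod_linear)
qed

lemma graeffe_eqI:
  assumes deg: "degree q \<le> degree f"
    and q: "f * pcompose f [:0, -1:] = smult ((-1) ^ degree f) (pcompose q [:0, 0, 1:])"
  shows "graeffe f = q"
proof -
  have "(\<lambda>i. coeff (f * pcompose f [:0, -1:]) (2 * i)) = coeff (smult ((-1) ^ degree f) q)"
    by (simp add: q coeff_pcompose_square_var fun_eq_iff)
  then have "graeffe f = smult ((-1) ^ degree f) (smult ((-1) ^ degree f) q)"
    using deg by (simp add: graeffe_def Poly_map_coeff_upt del: upt_Suc)
  then show ?thesis
    by (simp flip: power_mult_distrib)
qed

lemma graeffe_smult_prod_linear:
  fixes w :: "'b \<Rightarrow> complex"
  assumes "c \<noteq> 0"
  shows "graeffe (smult c (\<Prod>k\<in>A. [:- w k, 1:])) = smult (c ^ 2) (\<Prod>k\<in>A. [:- (w k ^ 2), 1:])"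
proof (rule graeffe_eqI)
  let ?f = "smult c (\<Prod>k\<in>A. [:- w k, 1:])"
  have "pcompose ?f [:0, -1:] = smult c (\<Prod>k\<in>A. [:- w k, -1:])"
    by (simp add: pcompose_smult pcompose_prod pcompose_pCons)
  then have "?f * pcompose ?f [:0, -1:]
      = smult (c ^ 2) ((\<Prod>k\<in>A. [:- w k, 1:]) * (\<Prod>k\<in>A. [:- w k, -1:]))"
    by (simp add: power2_eq_square mult_ac)
  also have "\<dots> = smult (c ^ 2) (\<Prod>k\<in>A. [:- w k, 1:] * [:- w k, -1:])"
    by (simp only: prod.distrib)
  also have "(\<Prod>k\<in>A. [:- w k, 1:] * [:- w k, -1:])
      = (\<Prod>k\<in>A. smult (-1) (pcompose [:- (w k ^ 2), 1:] [:0, 0, 1:]))"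
    by (intro prod.cong refl) (simp add: pcompose_pCons power2_eq_square)
  also have "\<dots> = smult ((-1) ^ card A) (pcompose (\<Prod>k\<in>A. [:- (w k ^ 2), 1:]) [:0, 0, 1:])"
    by (simp only: prod_smult prod_constant pcompose_prod)
  finally show "?f * pcompose ?f [:0, -1:]
      = smult ((-1) ^ degree ?f) (pcompose (smult (c ^ 2) (\<Prod>k\<in>A. [:- (w k ^ 2), 1:])) [:0, 0, 1:])"
    using assms by (simp add: degree_prod_linear pcompose_smult mult.commute)
qed (use assms in \<open>simp add: degree_prod_linear\<close>)

lemma graeffe_iterate_smult_prod_linear:
  fixes w :: "'b \<Rightarrow> complex"
  assumes "c \<noteq> 0"
  shows "(graeffe ^^ N) (smult c (\<Prod>k\<in>A. [:- w k, 1:]))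
    = smult (c ^ 2 ^ N) (\<Prod>k\<in>A. [:- (w k ^ 2 ^ N), 1:])"
proof (induction N)
  case (Suc N)
  then show ?case
    using assms by (simp add: graeffe_smult_prod_linear flip: power_mult power_Suc2)
qed simp

section \<open>Maximal terms\<close>

definition geometric_fps :: "'a::comm_ring_1 \<Rightarrow> 'a fps" where
  "geometric_fps z = Abs_fps (\<lambda>n. z ^ n)"

lemma fps_of_poly_linear_mult_geometric_fps:
  "fps_of_poly [:1, - z:] * geometric_fps z = 1"
proof (rule fps_ext)
  fix n
  have linear: "fps_of_poly [:1, - z:] = 1 - fps_const z * fps_X"
    by (simp add: fps_of_poly_pCons)
  show "fps_nth (fps_of_poly [:1, - z:] * geometric_fps z) n = fps_nth (1 :: 'a fps) n"
    unfolding linear by (cases n) (auto simp: algebra_simps geometric_fps_def)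
qed

lemma sum_powers_le_Suc_power:
  fixes x :: real
  assumes "0 \<le> x"
  shows "(\<Sum>j\<le>l. x ^ j) \<le> (x + 1) ^ l"
proof (induction l)
  case (Suc l)
  have "(\<Sum>j\<le>Suc l. x ^ j) = 1 + x * (\<Sum>j\<le>l. x ^ j)"
    by (simp add: sum.atMost_Suc_shift sum_distrib_left del: sum.atMost_Suc)
  also have "\<dots> \<le> 1 + x * (x + 1) ^ l"
    using Suc assms by (simp add: mult_left_mono)
  also have "\<dots> \<le> (x + 1) ^ Suc l"
    using assms by (simp add: algebra_simps)
  finally show ?case .
qed simp

lemma norm_nth_prod_geometric_fps_le:
  fixes z :: "'b \<Rightarrow> 'a::real_normed_field"
  assumes "finite K" and "\<And>k. k \<in> K \<Longrightarrow> norm (z k) \<le> \<sigma>"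
  shows "norm (fps_nth (\<Prod>k\<in>K. geometric_fps (z k)) l) \<le> (real (card K) * \<sigma>) ^ l"
  using assms
proof (induction K arbitrary: l rule: finite_induct)
  case empty
  then show ?case by (cases l) auto
next
  case (insert k K)
  let ?n = "real (card K)"
  have \<sigma>: "0 \<le> \<sigma>"
    using insert.prems[of k] norm_ge_zero order_trans by blast
  have "fps_nth (\<Prod>k\<in>insert k K. geometric_fps (z k)) l
      = (\<Sum>i=0..l. z k ^ i * fps_nth (\<Prod>k\<in>K. geometric_fps (z k)) (l - i))"
    using insert by (simp add: fps_mult_nth geometric_fps_def)
  also have "norm \<dots> \<le> (\<Sum>i=0..l. \<sigma> ^ i * (?n * \<sigma>) ^ (l - i))"
    using insert \<sigma>
    by (intro order.trans[OF norm_sum sum_mono])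
       (auto simp: norm_mult norm_power intro!: mult_mono power_mono)
  also have "\<dots> = (\<Sum>i=0..l. \<sigma> ^ l * ?n ^ (l - i))"
    by (intro sum.cong refl) (simp add: power_mult_distrib mult.left_commute flip: power_add)
  also have "\<dots> = \<sigma> ^ l * (\<Sum>i=0..l. ?n ^ (l - i))"
    by (simp add: sum_distrib_left)
  also have "(\<Sum>i=0..l. ?n ^ (l - i)) = (\<Sum>j\<le>l. ?n ^ j)"
    by (rule sum.reindex_bij_witness[of _ "\<lambda>j. l - j" "\<lambda>i. l - i"]) auto
  also have "\<sigma> ^ l * (\<Sum>j\<le>l. ?n ^ j) \<le> \<sigma> ^ l * (?n + 1) ^ l"
    using \<sigma> by (intro mult_left_mono sum_powers_le_Suc_power) auto
  also have "\<dots> = (real (card (insert k K)) * \<sigma>) ^ l"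
    using insert by (simp add: power_mult_distrib mult.commute add.commute)
  finally show ?case .
qed

lemma sum_half_powers_le_1: "(\<Sum>i<J. (1 / 2 :: real) ^ (J - i)) \<le> 1"
proof (induction J)
  case (Suc J)
  have "(\<Sum>i<Suc J. (1 / 2 :: real) ^ (Suc J - i)) = (\<Sum>i<J. (1 / 2) ^ (J - i)) / 2 + 1 / 2"
    by (simp add: Suc_diff_le sum_divide_distrib)
  then show ?case
    using Suc by linarith
qed simp

lemma exists_maximal_index:
  fixes w :: "nat \<Rightarrow> 'a::linorder"
  obtains m where "m \<le> a" "\<And>k. k \<le> a \<Longrightarrow> w k \<le> w m"
proof -
  have "Max (w ` {..a}) \<in> w ` {..a}"
    by (rule Max_in) auto
  then obtain m where "m \<le> a" "Max (w ` {..a}) = w m"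
    by (metis atMost_iff imageE)
  then show ?thesis
    using that by (metis Max_ge atMost_iff finite_atMost finite_imageI imageI)
qed

definition is_maximal_term :: "'a::real_normed_vector poly \<Rightarrow> real \<Rightarrow> nat \<Rightarrow> bool" where
  "is_maximal_term p \<rho> m \<longleftrightarrow> (\<forall>k. norm (coeff p k) * \<rho> ^ k \<le> norm (coeff p m) * \<rho> ^ m)"

lemma maximal_term_index_le_degree_fps:
  fixes h p :: "'a::real_normed_field poly"
  assumes h_\<beta>: "fps_of_poly h * \<beta> = fps_of_poly p" and \<beta>0: "fps_nth \<beta> 0 = 1"
    and \<beta>_le: "\<And>l. norm (fps_nth \<beta> l) * \<rho> ^ l \<le> (1 / 2) ^ l"
    and p: "degree p \<le> a" and \<rho>: "\<rho> > 0"
  obtains m where "m \<le> a" "is_maximal_term h \<rho> m"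
proof -
  define w where "w k = norm (coeff h k) * \<rho> ^ k" for k
  have w_nonneg: "0 \<le> w k" for k
    using \<rho> by (simp add: w_def)
  have recurrence: "coeff h J = - (\<Sum>i<J. coeff h i * fps_nth \<beta> (J - i))" if "a < J" for J
  proof -
    have "fps_nth (fps_of_poly h * \<beta>) J = 0"
      using that p by (simp add: h_\<beta> coeff_eq_0)
    then show ?thesis
      by (simp add: fps_mult_nth atLeast0AtMost \<beta>0 eq_neg_iff_add_eq_0 add.commute
          flip: lessThan_Suc_atMost)
  qed
  obtain m where m: "m \<le> a" "\<And>k. k \<le> a \<Longrightarrow> w k \<le> w m"
    using exists_maximal_index by blast
  have "w J \<le> w m" for J
  proof (induction J rule: less_induct)
    case (less J)
    show ?case
    proof (cases "J \<le> a")
      case False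
      have "w J = norm (\<Sum>i<J. coeff h i * fps_nth \<beta> (J - i)) * \<rho> ^ J"
        using recurrence[of J] False by (simp add: w_def)
      also have "\<dots> \<le> (\<Sum>i<J. norm (coeff h i) * norm (fps_nth \<beta> (J - i))) * \<rho> ^ J"
        using \<rho> by (intro mult_right_mono order.trans[OF norm_sum]) (auto simp: norm_mult)
      also have "\<dots> = (\<Sum>i<J. w i * (norm (fps_nth \<beta> (J - i)) * \<rho> ^ (J - i)))"
        unfolding sum_distrib_right w_def
        by (intro sum.cong refl) (simp add: mult_ac flip: power_add)
      also have "\<dots> \<le> (\<Sum>i<J. w m * (1 / 2) ^ (J - i))"
        using less.IH \<beta>_le w_nonneg \<rho> by (intro sum_mono mult_mono) auto
      also have "\<dots> \<le> w m"
        using sum_half_powers_le_1[of J] mult_left_mono[of _ 1 "w m"] w_nonneg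
        by (simp flip: sum_distrib_left)
      finally show ?thesis .
    qed (use m in auto)
  qed
  then show ?thesis
    using that m(1) unfolding is_maximal_term_def w_def by blast
qed

lemma maximal_term_index_le_degree:
  fixes p :: "'a::real_normed_field poly" and z :: "'b \<Rightarrow> 'a"
  assumes h: "h = p * (\<Prod>k\<in>K. [:1, - z k:])" and K: "finite K" and p: "degree p \<le> a"
    and z: "\<And>k. k \<in> K \<Longrightarrow> norm (z k) \<le> \<sigma>"
    and small: "real (card K) * \<sigma> * \<rho> \<le> 1 / 2" and \<rho>: "\<rho> > 0"
  obtains m where "m \<le> a" "is_maximal_term h \<rho> m"
proof (rule maximal_term_index_le_degree_fps[OF _ _ _ p \<rho> that])
  define \<beta> where "\<beta> = (\<Prod>k\<in>K. geometric_fps (z k))"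
  show "fps_of_poly h * \<beta> = fps_of_poly p"
    by (simp add: h \<beta>_def fps_of_poly_mult fps_of_poly_prod mult.assoc
        fps_of_poly_linear_mult_geometric_fps flip: prod.distrib)
  show "fps_nth \<beta> 0 = 1"
    unfolding \<beta>_def using K by (induction K rule: finite_induct) (auto simp: geometric_fps_def)
  show "norm (fps_nth \<beta> l) * \<rho> ^ l \<le> (1 / 2) ^ l" for l
  proof -
    have "norm (fps_nth \<beta> l) \<le> (real (card K) * \<sigma>) ^ l"
      unfolding \<beta>_def by (rule norm_nth_prod_geometric_fps_le[OF K z])
    then have "norm (fps_nth \<beta> l) * \<rho> ^ l \<le> (real (card K) * \<sigma> * \<rho>) ^ l"
      using \<rho> by (simp add: power_mult_distrib mult_right_mono)
    also have "\<dots> \<le> (1 / 2) ^ l"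
    proof (cases "K = {}")
      case False
      then have "0 \<le> \<sigma>"
        using z norm_ge_zero order_trans by blast
      then show ?thesis
        using small \<rho> by (intro power_mono) auto
    qed (cases l; simp)
    finally show ?thesis .
  qed
qed

lemma maximal_term_coeff_nonzero:
  assumes "is_maximal_term p \<rho> m" "p \<noteq> 0" "\<rho> > 0"
  shows "coeff p m \<noteq> 0"
proof -
  have "0 < norm (lead_coeff p) * \<rho> ^ degree p"
    using assms(2,3) by simp
  also have "\<dots> \<le> norm (coeff p m) * \<rho> ^ m"
    using assms(1) unfolding is_maximal_term_def ..
  finally show ?thesis
    by auto
qed

lemma maximal_term_reflect_poly:
  fixes p :: "'a::real_normed_field poly"
  assumes max: "is_maximal_term (reflect_poly p) (inverse \<rho>) m" and m: "m \<le> degree p"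
    and \<rho>: "\<rho> > 0"
  shows "is_maximal_term p \<rho> (degree p - m)"
  unfolding is_maximal_term_def
proof
  fix k
  let ?d = "degree p"
  show "norm (coeff p k) * \<rho> ^ k \<le> norm (coeff p (?d - m)) * \<rho> ^ (?d - m)"
  proof (cases "k \<le> ?d")
    case True
    have reflect: "norm (coeff p j) * \<rho> ^ j
        = \<rho> ^ ?d * (norm (coeff (reflect_poly p) (?d - j)) * inverse \<rho> ^ (?d - j))"
      if "j \<le> ?d" for j
    proof -
      have "\<rho> ^ ?d = \<rho> ^ j * \<rho> ^ (?d - j)"
        using that by (simp flip: power_add)
      then show ?thesis
        using that \<rho> by (simp add: coeff_reflect_poly field_simps)
    qed
    show ?thesis
      unfolding reflect[OF True] reflect[OF diff_le_self] diff_diff_cancel[OF m]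
      using max \<rho> unfolding is_maximal_term_def by (simp add: mult_left_mono)
  qed (use \<rho> in \<open>simp add: coeff_eq_0\<close>)
qed

lemma maximal_term_below_root_index:
  fixes w :: "nat \<Rightarrow> 'a::real_normed_field"
  assumes P: "P = smult C (\<Prod>k=1..d. [:- w k, 1:])"
    and w0: "\<And>k. k \<in> {1..d} \<Longrightarrow> w k \<noteq> 0"
    and mono: "\<And>a b. 1 \<le> a \<Longrightarrow> a \<le> b \<Longrightarrow> b \<le> d \<Longrightarrow> norm (w a) \<le> norm (w b)"
    and i: "1 \<le> i" "i \<le> d"
  obtains m where "m < i" "is_maximal_term P (norm (w i) / (2 * real d)) m"
proof -
  define K where "K = {i..d}"
  define p where "p = smult (C * (\<Prod>k\<in>K. - w k)) (\<Prod>k\<in>{1..<i}. [:- w k, 1:])"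
  have "(\<Prod>k=1..d. [:- w k, 1:]) = (\<Prod>k\<in>{1..<i}. [:- w k, 1:]) * (\<Prod>k\<in>K. [:- w k, 1:])"
    using i by (subst prod.union_disjoint[symmetric]) (auto simp: K_def intro!: prod.cong)
  also have "(\<Prod>k\<in>K. [:- w k, 1:]) = (\<Prod>k\<in>K. smult (- w k) [:1, - inverse (w k):])"
    using w0 i by (intro prod.cong refl) (auto simp: K_def)
  also have "\<dots> = smult (\<Prod>k\<in>K. - w k) (\<Prod>k\<in>K. [:1, - inverse (w k):])"
    by (rule prod_smult)
  finally have factor: "P = p * (\<Prod>k\<in>K. [:1, - inverse (w k):])"
    by (simp add: P p_def mult.commute)
  have degree: "degree p \<le> i - 1"
    unfolding p_def by (simp add: degree_prod_linear)
  have roots: "norm (inverse (w k)) \<le> inverse (norm (w i))" if "k \<in> K" for k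
    using that w0 mono[of i k] i unfolding K_def by (simp add: norm_inverse le_imp_inverse_le)
  have small: "real (card K) * inverse (norm (w i)) * (norm (w i) / (2 * real d)) \<le> 1 / 2"
    using w0 i by (simp add: K_def field_simps)
  have \<rho>: "norm (w i) / (2 * real d) > 0"
    using w0 i by simp
  have "finite K"
    by (simp add: K_def)
  then obtain m where "m \<le> i - 1" "is_maximal_term P (norm (w i) / (2 * real d)) m"
    by (rule maximal_term_index_le_degree[OF factor _ degree roots small \<rho>])
  with i show ?thesis
    by (intro that) auto
qed

lemma maximal_term_above_root_index:
  fixes w :: "nat \<Rightarrow> 'a::real_normed_field"
  assumes P: "P = smult C (\<Prod>k=1..d. [:- w k, 1:])" and C: "C \<noteq> 0"
    and w0: "\<And>k. k \<in> {1..d} \<Longrightarrow> w k \<noteq> 0"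
    and mono: "\<And>a b. 1 \<le> a \<Longrightarrow> a \<le> b \<Longrightarrow> b \<le> d \<Longrightarrow> norm (w a) \<le> norm (w b)"
    and i: "1 \<le> i" "i \<le> d"
  obtains j where "i \<le> j" "j \<le> d" "is_maximal_term P (2 * real d * norm (w i)) j"
proof -
  define K where "K = {1..i}"
  define p where "p = smult C (\<Prod>k\<in>{Suc i..d}. [:1, - w k:])"
  define \<rho> where "\<rho> = 2 * real d * norm (w i)"
  have "reflect_poly P = smult C (\<Prod>k=1..d. reflect_poly [:- w k, 1:])"
    by (simp only: P reflect_poly_smult reflect_poly_prod)
  also have "(\<Prod>k=1..d. reflect_poly [:- w k, 1:]) = (\<Prod>k=1..d. [:1, - w k:])"
    using w0 by (intro prod.cong refl) (simp add: reflect_poly_def)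
  also have "(\<Prod>k=1..d. [:1, - w k:]) = (\<Prod>k\<in>{Suc i..d}. [:1, - w k:]) * (\<Prod>k\<in>K. [:1, - w k:])"
    using i by (subst prod.union_disjoint[symmetric]) (auto simp: K_def intro!: prod.cong)
  finally have factor: "reflect_poly P = p * (\<Prod>k\<in>K. [:1, - w k:])"
    by (simp add: p_def mult_ac)
  have degree: "degree p \<le> d - i"
    unfolding p_def using w0 i by (simp add: degree_prod_eq_sum_degree)
  have roots: "norm (w k) \<le> norm (w i)" if "k \<in> K" for k
    using that mono i unfolding K_def by simp
  have small: "real (card K) * norm (w i) * inverse \<rho> \<le> 1 / 2"
    using w0 i by (simp add: K_def \<rho>_def field_simps)
  have \<rho>: "\<rho> > 0"
    using w0 i by (simp add: \<rho>_def)
  then have inverse_\<rho>: "inverse \<rho> > 0"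
    by simp
  have "finite K"
    by (simp add: K_def)
  then obtain m where m: "m \<le> d - i" "is_maximal_term (reflect_poly P) (inverse \<rho>) m"
    by (rule maximal_term_index_le_degree[OF factor _ degree roots small inverse_\<rho>])
  have "degree P = d"
    using C by (simp add: P degree_prod_linear)
  then have "is_maximal_term P \<rho> (d - m)"
    using maximal_term_reflect_poly[OF m(2) _ \<rho>] m(1) by simp
  with m(1) i show ?thesis
    unfolding \<rho>_def by (intro that) auto
qed

section \<open>Convex envelopes\<close>

lemma convex_on_diff_ge_of_supporting_line:
  fixes \<phi> :: "real \<Rightarrow> real"
  assumes \<phi>: "convex_on S \<phi>" and S: "m \<in> S" "y \<in> S"
    and above: "\<And>s. s \<in> S \<Longrightarrow> \<alpha> + \<tau> * s \<le> \<phi> s" and touch: "\<phi> m = \<alpha> + \<tau> * m"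
    and order: "m \<le> x" "x \<le> y"
  shows "\<tau> * (y - x) \<le> \<phi> y - \<phi> x"
proof (cases "x = y")
  case False
  define \<mu> where "\<mu> = (y - x) / (y - m)"
  have "m < y"
    using order False by linarith
  then have scale: "\<mu> * (y - m) = y - x" and \<mu>: "0 \<le> \<mu>" "\<mu> \<le> 1"
    using order by (auto simp: \<mu>_def)
  have "(1 - \<mu>) *\<^sub>R y + \<mu> *\<^sub>R m = x"
    using scale by (simp add: algebra_simps)
  then have "\<phi> x \<le> (1 - \<mu>) * \<phi> y + \<mu> * \<phi> m"
    using convex_onD[OF \<phi> \<mu> S(2,1)] by simp
  moreover have "\<mu> * (\<tau> * (y - m)) \<le> \<mu> * (\<phi> y - \<phi> m)"
    using above[OF S(2)] touch \<mu> by (intro mult_left_mono) (auto simp: algebra_simps)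
  moreover have "\<mu> * (\<tau> * (y - m)) = \<tau> * (y - x)"
    using scale by (metis mult.left_commute)
  ultimately show ?thesis
    by (simp add: algebra_simps)
qed simp

lemma convex_on_diff_le_of_supporting_line:
  fixes \<phi> :: "real \<Rightarrow> real"
  assumes \<phi>: "convex_on S \<phi>" and S: "x \<in> S" "m \<in> S"
    and above: "\<And>s. s \<in> S \<Longrightarrow> \<alpha> + \<tau> * s \<le> \<phi> s" and touch: "\<phi> m = \<alpha> + \<tau> * m"
    and order: "x \<le> y" "y \<le> m"
  shows "\<phi> y - \<phi> x \<le> \<tau> * (y - x)"
proof (cases "x = y")
  case False
  define \<mu> where "\<mu> = (y - x) / (m - x)"
  have "x < m"
    using order False by linarith
  then have scale: "\<mu> * (m - x) = y - x" and \<mu>: "0 \<le> \<mu>" "\<mu> \<le> 1"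
    using order by (auto simp: \<mu>_def)
  have "(1 - \<mu>) *\<^sub>R x + \<mu> *\<^sub>R m = y"
    using scale by (simp add: algebra_simps)
  then have "\<phi> y \<le> (1 - \<mu>) * \<phi> x + \<mu> * \<phi> m"
    using convex_onD[OF \<phi> \<mu> S] by simp
  moreover have "\<mu> * (\<phi> m - \<phi> x) \<le> \<mu> * (\<tau> * (m - x))"
    using above[OF S(1)] touch \<mu> by (intro mult_left_mono) (auto simp: algebra_simps)
  moreover have "\<mu> * (\<tau> * (m - x)) = \<tau> * (y - x)"
    using scale by (metis mult.left_commute)
  ultimately show ?thesis
    by (simp add: algebra_simps)
qed simp

definition convex_minorant :: "real set \<Rightarrow> (real \<Rightarrow> ereal) \<Rightarrow> (real \<Rightarrow> real) \<Rightarrow> bool" where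
  "convex_minorant S r h \<longleftrightarrow> convex_on S h \<and> (\<forall>s\<in>S. ereal (h s) \<le> r s)"

definition convex_envelope :: "real set \<Rightarrow> (real \<Rightarrow> ereal) \<Rightarrow> real \<Rightarrow> real" where
  "convex_envelope S r t = Sup {h t | h. convex_minorant S r h}"

text \<open>Finite values of r at both endpoints bound all convex minorants; without such a bound
  the supremum defining the envelope would be the junk value of Sup on an unbounded set.\<close>

lemma convex_minorant_le_max:
  assumes h: "convex_minorant {a..b} r h" and ends: "r a = ereal u" "r b = ereal v"
    and t: "t \<in> {a..b}"
  shows "h t \<le> max u v"
proof -
  have "a \<le> b"
    using t by simp
  then have "h a \<le> u" "h b \<le> v"
    using h ends unfolding convex_minorant_def by force+
  then show ?thesis
    using convex_on_le_max[OF _ t, of h] h unfolding convex_minorant_def by linarith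
qed

lemma convex_minorant_le_convex_envelope:
  assumes "convex_minorant {a..b} r h" "r a = ereal u" "r b = ereal v" "t \<in> {a..b}"
  shows "h t \<le> convex_envelope {a..b} r t"
  unfolding convex_envelope_def
proof (rule cSup_upper)
  show "bdd_above {h t |h. convex_minorant {a..b} r h}"
    using convex_minorant_le_max[OF _ assms(2-4)] by (auto intro!: bdd_aboveI[of _ "max u v"])
qed (use assms in auto)

lemma convex_envelope_le:
  assumes "convex_minorant S r h" "s \<in> S" "r s = ereal x"
  shows "convex_envelope S r s \<le> x"
  unfolding convex_envelope_def
proof (rule cSup_least)
  show "{h s |h. convex_minorant S r h} \<noteq> {}"
    using assms(1) by auto
qed (use assms(2,3) in \<open>auto simp: convex_minorant_def\<close>)

lemma convex_on_convex_envelope: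
  assumes h: "convex_minorant {a..b} r h" and ends: "r a = ereal u" "r b = ereal v"
  shows "convex_on {a..b} (convex_envelope {a..b} r)"
proof (rule convex_onI)
  fix t x y :: real
  assume t: "0 < t" "t < 1" and xy: "x \<in> {a..b}" "y \<in> {a..b}"
  let ?\<Phi> = "convex_envelope {a..b} r"
  show "?\<Phi> ((1 - t) *\<^sub>R x + t *\<^sub>R y) \<le> (1 - t) * ?\<Phi> x + t * ?\<Phi> y"
    unfolding convex_envelope_def[of _ _ "(1 - t) *\<^sub>R x + t *\<^sub>R y"]
  proof (rule cSup_least)
    fix z assume "z \<in> {g ((1 - t) *\<^sub>R x + t *\<^sub>R y) |g. convex_minorant {a..b} r g}"
    then obtain g where z: "z = g ((1 - t) *\<^sub>R x + t *\<^sub>R y)" and g: "convex_minorant {a..b} r g"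
      by auto
    have "z \<le> (1 - t) * g x + t * g y"
      using g t xy unfolding z convex_minorant_def by (intro convex_onD) auto
    also have "\<dots> \<le> (1 - t) * ?\<Phi> x + t * ?\<Phi> y"
      using t convex_minorant_le_convex_envelope[OF g ends] xy
      by (intro add_mono mult_left_mono) auto
    finally show "z \<le> (1 - t) * ?\<Phi> x + t * ?\<Phi> y" .
  qed (use h in auto)
qed simp

lemma convex_envelope_diff_ge:
  assumes \<ell>: "convex_minorant {a..b} r (\<lambda>s. \<alpha> + \<tau> * s)" and ends: "r a = ereal u" "r b = ereal v"
    and m: "m \<in> {a..b}" "r m = ereal (\<alpha> + \<tau> * m)" and order: "m \<le> x" "x \<le> y" "y \<le> b"
  shows "\<tau> * (y - x) \<le> convex_envelope {a..b} r y - convex_envelope {a..b} r x"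
proof (rule convex_on_diff_ge_of_supporting_line[OF convex_on_convex_envelope[OF \<ell> ends] m(1)])
  show "\<alpha> + \<tau> * s \<le> convex_envelope {a..b} r s" if "s \<in> {a..b}" for s
    using convex_minorant_le_convex_envelope[OF \<ell> ends that] .
  then show "convex_envelope {a..b} r m = \<alpha> + \<tau> * m"
    using convex_envelope_le[OF \<ell> m] m(1) by (meson order.antisym)
qed (use m order in auto)

lemma convex_envelope_diff_le:
  assumes \<ell>: "convex_minorant {a..b} r (\<lambda>s. \<alpha> + \<tau> * s)" and ends: "r a = ereal u" "r b = ereal v"
    and m: "m \<in> {a..b}" "r m = ereal (\<alpha> + \<tau> * m)" and order: "a \<le> x" "x \<le> y" "y \<le> m"
  shows "convex_envelope {a..b} r y - convex_envelope {a..b} r x \<le> \<tau> * (y - x)"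
proof (rule convex_on_diff_le_of_supporting_line[OF convex_on_convex_envelope[OF \<ell> ends] _ m(1)])
  show "\<alpha> + \<tau> * s \<le> convex_envelope {a..b} r s" if "s \<in> {a..b}" for s
    using convex_minorant_le_convex_envelope[OF \<ell> ends that] .
  then show "convex_envelope {a..b} r m = \<alpha> + \<tau> * m"
    using convex_envelope_le[OF \<ell> m] m(1) by (meson order.antisym)
qed (use m order in auto)

section \<open>The renormalized Newton diagram\<close>

lemma rnd_eq_convex_envelope: "rnd f N = convex_envelope {0..real (degree f)} (newton_r f N)"
  by (simp add: fun_eq_iff rnd_def convex_envelope_def convex_minorant_def)

lemma newton_r_of_nat: "newton_r f N (real k) = newton_pt f N k"
  unfolding newton_r_def Let_def by (simp add: zero_ereal_def[symmetric])

lemma newton_pt_eq_ereal: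
  "coeff ((graeffe ^^ N) f) k \<noteq> 0 \<Longrightarrow>
    newton_pt f N k = ereal (- ln (norm (coeff ((graeffe ^^ N) f) k)) / 2 ^ N)"
  by (simp add: newton_pt_def)

lemma affine_le_newton_r:
  assumes line: "\<And>k. ereal (\<alpha> + \<tau> * real k) \<le> newton_pt f N k" and s: "0 \<le> s"
  shows "ereal (\<alpha> + \<tau> * s) \<le> newton_r f N s"
proof -
  define k where "k = nat \<lfloor>s\<rfloor>"
  define \<theta> where "\<theta> = s - real k"
  have \<theta>: "0 \<le> \<theta>" "\<theta> \<le> 1"
    using s by (auto simp: \<theta>_def k_def) linarith
  have "ereal (\<alpha> + \<tau> * s)
      = ereal (1 - \<theta>) * ereal (\<alpha> + \<tau> * real k) + ereal \<theta> * ereal (\<alpha> + \<tau> * real (Suc k))"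
    by (simp add: \<theta>_def algebra_simps)
  also have "\<dots> \<le> ereal (1 - \<theta>) * newton_pt f N k + ereal \<theta> * newton_pt f N (Suc k)"
    using \<theta> by (intro add_mono ereal_mult_left_mono line) auto
  also have "\<dots> = newton_r f N s"
    unfolding newton_r_def Let_def k_def[symmetric] \<theta>_def[symmetric] ..
  finally show ?thesis .
qed

lemma convex_minorant_affine_newton_r:
  assumes "\<And>k. ereal (\<alpha> + \<tau> * real k) \<le> newton_pt f N k"
  shows "convex_minorant {0..D} (newton_r f N) (\<lambda>s. \<alpha> + \<tau> * s)"
  unfolding convex_minorant_def
proof (intro conjI ballI)
  show "convex_on {0..D} (\<lambda>s. \<alpha> + \<tau> * s)"
    by (rule convex_onI) (simp_all add: algebra_simps)
qed (use affine_le_newton_r[OF assms] in auto)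

lemma maximal_term_supporting_line:
  assumes max: "is_maximal_term ((graeffe ^^ N) f) \<rho> m" and \<rho>: "\<rho> > 0"
    and nonzero: "coeff ((graeffe ^^ N) f) m \<noteq> 0"
  obtains \<alpha> where "\<And>k. ereal (\<alpha> + ln \<rho> / 2 ^ N * real k) \<le> newton_pt f N k"
    and "newton_pt f N m = ereal (\<alpha> + ln \<rho> / 2 ^ N * real m)"
proof
  let ?c = "coeff ((graeffe ^^ N) f)"
  define \<alpha> where "\<alpha> = - ln (norm (?c m)) / 2 ^ N - ln \<rho> / 2 ^ N * real m"
  show "newton_pt f N m = ereal (\<alpha> + ln \<rho> / 2 ^ N * real m)"
    using nonzero by (simp add: newton_pt_eq_ereal \<alpha>_def)
  show "ereal (\<alpha> + ln \<rho> / 2 ^ N * real k) \<le> newton_pt f N k" for k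
  proof (cases "?c k = 0")
    case False
    have "ln (norm (?c k) * \<rho> ^ k) \<le> ln (norm (?c m) * \<rho> ^ m)"
      using max False nonzero \<rho> unfolding is_maximal_term_def by simp
    then have "ln (norm (?c k)) + real k * ln \<rho> \<le> ln (norm (?c m)) + real m * ln \<rho>"
      using False nonzero \<rho> by (simp add: ln_mult ln_realpow)
    then have "(- ln (norm (?c m)) + ln \<rho> * (real k - real m)) / 2 ^ N \<le> - ln (norm (?c k)) / 2 ^ N"
      by (intro divide_right_mono) (auto simp: algebra_simps)
    also have "(- ln (norm (?c m)) + ln \<rho> * (real k - real m)) / 2 ^ N = \<alpha> + ln \<rho> / 2 ^ N * real k"
      by (simp add: \<alpha>_def field_simps)
    finally show ?thesis
      using False by (simp add: newton_pt_eq_ereal)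
  qed (simp add: newton_pt_def)
qed

lemma rnd_diff_ge_of_maximal_term:
  assumes ends: "coeff ((graeffe ^^ N) f) 0 \<noteq> 0" "coeff ((graeffe ^^ N) f) (degree f) \<noteq> 0"
    and max: "is_maximal_term ((graeffe ^^ N) f) \<rho> m" and \<rho>: "\<rho> > 0"
    and i: "m < i" "i \<le> degree f"
  shows "ln \<rho> / 2 ^ N \<le> rnd f N (real i) - rnd f N (real i - 1)"
proof -
  have "(graeffe ^^ N) f \<noteq> 0"
    using ends(1) by force
  then have "coeff ((graeffe ^^ N) f) m \<noteq> 0"
    using maximal_term_coeff_nonzero[OF max _ \<rho>] by blast
  then obtain \<alpha> where line: "\<And>k. ereal (\<alpha> + ln \<rho> / 2 ^ N * real k) \<le> newton_pt f N k"
    and touch: "newton_pt f N m = ereal (\<alpha> + ln \<rho> / 2 ^ N * real m)"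
    using maximal_term_supporting_line[OF max \<rho>] by blast
  have "ln \<rho> / 2 ^ N * (real i - (real i - 1)) \<le> rnd f N (real i) - rnd f N (real i - 1)"
    unfolding rnd_eq_convex_envelope
  proof (rule convex_envelope_diff_ge[OF convex_minorant_affine_newton_r[OF line]])
    show "newton_r f N 0 = ereal (- ln (norm (coeff ((graeffe ^^ N) f) 0)) / 2 ^ N)"
      using newton_r_of_nat[of f N 0] ends(1) by (simp add: newton_pt_eq_ereal)
    show "newton_r f N (real (degree f))
        = ereal (- ln (norm (coeff ((graeffe ^^ N) f) (degree f))) / 2 ^ N)"
      using ends(2) by (simp add: newton_r_of_nat newton_pt_eq_ereal)
    show "newton_r f N (real m) = ereal (\<alpha> + ln \<rho> / 2 ^ N * real m)"
      using touch by (simp add: newton_r_of_nat)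
  qed (use i in auto)
  then show ?thesis
    by simp
qed

lemma rnd_diff_le_of_maximal_term:
  assumes ends: "coeff ((graeffe ^^ N) f) 0 \<noteq> 0" "coeff ((graeffe ^^ N) f) (degree f) \<noteq> 0"
    and max: "is_maximal_term ((graeffe ^^ N) f) \<rho> m" and \<rho>: "\<rho> > 0"
    and i: "1 \<le> i" "i \<le> m" "m \<le> degree f"
  shows "rnd f N (real i) - rnd f N (real i - 1) \<le> ln \<rho> / 2 ^ N"
proof -
  have "(graeffe ^^ N) f \<noteq> 0"
    using ends(1) by force
  then have "coeff ((graeffe ^^ N) f) m \<noteq> 0"
    using maximal_term_coeff_nonzero[OF max _ \<rho>] by blast
  then obtain \<alpha> where line: "\<And>k. ereal (\<alpha> + ln \<rho> / 2 ^ N * real k) \<le> newton_pt f N k"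
    and touch: "newton_pt f N m = ereal (\<alpha> + ln \<rho> / 2 ^ N * real m)"
    using maximal_term_supporting_line[OF max \<rho>] by blast
  have "rnd f N (real i) - rnd f N (real i - 1) \<le> ln \<rho> / 2 ^ N * (real i - (real i - 1))"
    unfolding rnd_eq_convex_envelope
  proof (rule convex_envelope_diff_le[OF convex_minorant_affine_newton_r[OF line]])
    show "newton_r f N 0 = ereal (- ln (norm (coeff ((graeffe ^^ N) f) 0)) / 2 ^ N)"
      using newton_r_of_nat[of f N 0] ends(1) by (simp add: newton_pt_eq_ereal)
    show "newton_r f N (real (degree f))
        = ereal (- ln (norm (coeff ((graeffe ^^ N) f) (degree f))) / 2 ^ N)"
      using ends(2) by (simp add: newton_r_of_nat newton_pt_eq_ereal)
    show "newton_r f N (real m) = ereal (\<alpha> + ln \<rho> / 2 ^ N * real m)"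
      using touch by (simp add: newton_r_of_nat)
  qed (use i in auto)
  then show ?thesis
    by simp
qed

lemma rnd_diff_bounds:
  fixes f :: "complex poly" and \<zeta> :: "nat \<Rightarrow> complex"
  assumes deg: "degree f = d" and f0: "poly f 0 \<noteq> 0"
    and roots: "f = smult (lead_coeff f) (\<Prod>k=1..d. [:- \<zeta> k, 1:])"
    and sorted: "\<And>k. 1 \<le> k \<Longrightarrow> k < d \<Longrightarrow> norm (\<zeta> k) \<le> norm (\<zeta> (Suc k))"
    and i: "1 \<le> i" "i \<le> d"
  shows "\<bar>rnd f N (real i) - rnd f N (real i - 1) - ln (norm (\<zeta> i))\<bar> \<le> ln (2 * real d) / 2 ^ N"
proof -
  define C where "C = lead_coeff f ^ 2 ^ N"
  define w where "w k = \<zeta> k ^ 2 ^ N" for k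
  let ?g = "(graeffe ^^ N) f"
  have lc: "lead_coeff f \<noteq> 0"
    using f0 by auto
  then have C: "C \<noteq> 0"
    by (simp add: C_def)
  have g: "?g = smult C (\<Prod>k=1..d. [:- w k, 1:])"
    unfolding C_def w_def by (subst roots) (simp add: graeffe_iterate_smult_prod_linear[OF lc])
  have \<zeta>0: "\<zeta> k \<noteq> 0" if "k \<in> {1..d}" for k
    using f0 that by (subst (asm) roots) (auto simp: poly_prod)
  then have w0: "w k \<noteq> 0" if "k \<in> {1..d}" for k
    using that by (simp add: w_def)
  have mono: "norm (w a) \<le> norm (w b)" if "1 \<le> a" "a \<le> b" "b \<le> d" for a b
    unfolding w_def norm_power
    using lift_Suc_mono_le_ivl[of "{1..<d}" "\<lambda>k. norm (\<zeta> k)"] sorted that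
    by (intro power_mono) auto
  have ends: "coeff ?g 0 \<noteq> 0" "coeff ?g (degree f) \<noteq> 0"
    unfolding g deg using coeff_smult_prod_linear_nonzero[where w = w and d = d, OF C w0]
    by simp_all
  have pos: "0 < norm (w i)" "0 < 2 * real d"
    using w0 i by auto
  have ln_w: "ln (norm (w i)) / 2 ^ N = ln (norm (\<zeta> i))"
    unfolding w_def norm_power using w0 i by (simp add: ln_realpow)
  have ln_lower:
    "ln (norm (w i) / (2 * real d)) / 2 ^ N = ln (norm (\<zeta> i)) - ln (2 * real d) / 2 ^ N"
    using ln_w by (simp add: ln_divide_pos[OF pos] diff_divide_distrib)
  have ln_upper:
    "ln (2 * real d * norm (w i)) / 2 ^ N = ln (norm (\<zeta> i)) + ln (2 * real d) / 2 ^ N"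
    using ln_w by (simp add: ln_mult_pos[OF pos(2,1)] add_divide_distrib)
  obtain m where m: "m < i" "is_maximal_term ?g (norm (w i) / (2 * real d)) m"
    by (rule maximal_term_below_root_index[OF g w0 mono i])
  obtain j where j: "i \<le> j" "j \<le> d" "is_maximal_term ?g (2 * real d * norm (w i)) j"
    by (rule maximal_term_above_root_index[OF g C w0 mono i])
  have "ln (norm (w i) / (2 * real d)) / 2 ^ N \<le> rnd f N (real i) - rnd f N (real i - 1)"
    using rnd_diff_ge_of_maximal_term[OF ends m(2) divide_pos_pos[OF pos] m(1)] i deg by blast
  moreover have "rnd f N (real i) - rnd f N (real i - 1) \<le> ln (2 * real d * norm (w i)) / 2 ^ N"
    using rnd_diff_le_of_maximal_term[OF ends j(3) mult_pos_pos[OF pos(2,1)] i(1) j(1)] j(2) deg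
    by blast
  ultimately show ?thesis
    unfolding ln_lower ln_upper by (simp add: abs_le_iff)
qed

theorem mainTheorem2:
  fixes f :: "complex poly" and d :: nat and \<zeta> :: "nat \<Rightarrow> complex"
  assumes "degree f = d"
    and "poly f 0 \<noteq> 0"
    and "f = smult (lead_coeff f) (\<Prod>i=1..d. [:- \<zeta> i, 1:])"
    and "\<And>i. 1 \<le> i \<Longrightarrow> i < d \<Longrightarrow> norm (\<zeta> i) \<le> norm (\<zeta> (Suc i))"
  shows "\<forall>i\<in>{1..d}.
     ((\<lambda>N. rnd f N (real i) - rnd f N (real i - 1)) \<longlonglongrightarrow> ln (norm (\<zeta> i))) \<and>
     (\<forall>N. \<bar>rnd f N (real i) - rnd f N (real i - 1) - ln (norm (\<zeta> i))\<bar> \<le> ln (2 * real d) / 2 ^ N)"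
proof
  fix i assume "i \<in> {1..d}"
  let ?s = "\<lambda>N. rnd f N (real i) - rnd f N (real i - 1)"
  have bound: "\<bar>?s N - ln (norm (\<zeta> i))\<bar> \<le> ln (2 * real d) / 2 ^ N" for N
    using rnd_diff_bounds[OF assms] \<open>i \<in> {1..d}\<close> by simp
  have "(\<lambda>N. ln (2 * real d) / 2 ^ N) \<longlonglongrightarrow> 0"
    by (rule LIMSEQ_divide_realpow_zero) simp
  then have "(\<lambda>N. ?s N - ln (norm (\<zeta> i))) \<longlonglongrightarrow> 0"
    by (rule Lim_null_comparison[rotated]) (simp add: bound always_eventually)
  then have "?s \<longlonglongrightarrow> ln (norm (\<zeta> i))"
    by (rule LIM_zero_cancel)
  then show "(?s \<longlonglongrightarrow> ln (norm (\<zeta> i))) \<and>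
      (\<forall>N. \<bar>?s N - ln (norm (\<zeta> i))\<bar> \<le> ln (2 * real d) / 2 ^ N)"
    using bound by (intro conjI allI)
qed

end
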